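(* Let $d\geq 2$. There exist $f_0,f_1\in\mathbb{F}_{2^d}$ such that $t^6+t^5+f_1t^4+f_0t^3+f_1t^2+t+1$ is irreducible over $\mathbb{F}_{2^d}$. *)

theory Defs
  imports "HOL-Computational_Algebra.Polynomial_Factorial"
begin

end

(* Let q = 2^d and work in an algebraic closure of the field with q elements, where GF Q is the
   subfield with Q elements and Tr is the trace from GF (q^3) to GF q. Take s in GF (q^3) but not
   in GF q with Tr s = 1, and let f1 = c1 + 1, f0 = c0 where 1, c1, c0 are the elementary symmetric
   functions of the conjugates s, s^q, s^(q^2). In characteristic 2, t^3 times the cubic with these
   roots, evaluated at u = t + 1/t, is the palindromic sextic; so every root t of the sextic has
   t + 1/t conjugate to s. Such t cannot lie in GF (q^2), since then u would lie in
   GF (q^2) and GF (q^3), hence in GF q; nor in GF (q^3), since solvability of t^2 + u t + 1 = 0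
   there forces the absolute trace of Tr (1/u) to vanish, which we exclude in the choice of s.
   A factor of degree at most 3 would have a root in one of these fields.

   A suitable s is obtained by rescaling any r in GF (q^3) - GF q for which the absolute trace of
   Tr r * Tr (1/r) is nonzero. If no such r existed, the sum of this quantity times r^M over the
   nonzero r in GF (q^3), with M = q - 1 or M = 3 (q - 1) according to the parity of d, would be
   computed in two ways: only the r in GF q contribute, giving d; expanding into monomials and
   using orthogonality of power sums gives 1 exactly when M = q - 1. *)

theory Submission
  imports Defs "HOL-Algebra.Algebraic_Closure_Type"
begin

hide_const (open) Divisibility.irreducible Divisibility.prime Coset.order Polynomials.degree
  Polynomials.lead_coeff up_ring.monom up_ring.coeff module.smult

lemma power_card_UNIV_eq_same:
  fixes x :: "'a::{field,finite}"
  shows "x ^ card (UNIV :: 'a set) = x"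
proof (cases "x = 0")
  case False
  have "(\<Prod>y\<in>UNIV-{0}. x * y) = (\<Prod>y\<in>UNIV-{0}. y :: 'a)"
    by (rule prod.reindex_bij_witness[of _ "\<lambda>y. y / x" "\<lambda>y. x * y"]) (use False in auto)
  then have "x ^ (card (UNIV :: 'a set) - 1) = 1"
    by (simp add: prod.distrib card_Diff_singleton)
  have "x ^ card (UNIV :: 'a set) = x ^ Suc (card (UNIV :: 'a set) - 1)"
    using finite_UNIV_card_ge_0[where ?'a = 'a] by simp
  also have "\<dots> = x"
    using \<open>x ^ (card (UNIV :: 'a set) - 1) = 1\<close> by simp
  finally show ?thesis .
qed (use finite_UNIV_card_ge_0[where ?'a = 'a] in auto)

lemma CHAR_eq_2_if_card_power_2:
  assumes "card (UNIV :: 'a::{field,finite} set) = 2 ^ d" and "d \<ge> 1"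
  shows "CHAR('a) = 2"
proof -
  have "(-1 :: 'a) = (-1) ^ card (UNIV :: 'a set)"
    by (rule power_card_UNIV_eq_same[symmetric])
  also have "\<dots> = 1"
    using assms by simp
  finally have "of_nat 2 = (0 :: 'a)"
    by (simp add: eq_neg_iff_add_eq_0)
  then have "CHAR('a) dvd 2"
    by (simp only: of_nat_eq_0_iff_char_dvd)
  then show ?thesis
    using CHAR_not_1[where ?'a = 'a] by (metis One_nat_def prime_nat_iff two_is_prime_nat)
qed

lemma of_nat_CHAR_2:
  assumes "CHAR('a::semiring_1) = 2"
  shows "(of_nat n :: 'a) = (if even n then 0 else 1)"
proof -
  have "(2 :: 'a) = 0"
    using of_nat_CHAR[where ?'a = 'a] assms by simp
  then show ?thesis
    by (induction n) auto
qed

lemma diff_power_prime_CHAR: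
  fixes x y :: "'a::comm_ring_1"
  assumes "prime CHAR('a)" and "q = CHAR('a) ^ n"
  shows "(x - y) ^ q = x ^ q - y ^ q"
  using freshmans_dream'[OF assms, of "x - y" y] by simp

lemma power_prime_CHAR_eq_iff:
  fixes x y :: "'a::idom"
  assumes "prime CHAR('a)" and "q = CHAR('a) ^ n"
  shows "x ^ q = y ^ q \<longleftrightarrow> x = y"
  using diff_power_prime_CHAR[OF assms, of x y] assms(2) by auto

lemma inj_power_power:
  assumes "inj (\<lambda>x::'a::monoid_mult. x ^ Q)"
  shows "inj (\<lambda>x::'a. x ^ Q ^ k)"
proof (induction k)
  case (Suc k)
  have "(\<lambda>x::'a. x ^ Q ^ Suc k) = (\<lambda>x. x ^ Q) \<circ> (\<lambda>x. x ^ Q ^ k)"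
    by (simp add: fun_eq_iff power_mult[symmetric] mult.commute)
  then show ?case
    using assms Suc by (simp add: inj_compose)
qed simp

lemma card_roots_rsquarefree:
  fixes p :: "'a::alg_closed_field poly"
  assumes "rsquarefree p"
  shows "card {x. poly p x = 0} = degree p"
proof -
  have p0: "p \<noteq> 0"
    using assms by (simp add: rsquarefree_def)
  obtain A where A: "size A = degree p" "p = smult (lead_coeff p) (\<Prod>x\<in>#A. [:-x, 1:])"
    using alg_closed_imp_factorization[OF p0] by blast
  have nonzero: "(\<Prod>x\<in>#B. [:-x, 1:]) \<noteq> (0 :: 'a poly)" for B
    by (induction B) (simp_all del: mult_pCons_left)
  have "proots (\<Prod>x\<in>#B. [:-x, 1:]) = B" for B :: "'a multiset"
    using nonzero by (induction B) (simp_all add: proots_mult del: mult_pCons_left)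
  then have roots: "proots p = A"
    using p0 by (subst A(2)) simp
  have "count A x = count (mset_set {x. poly p x = 0}) x" for x
  proof (cases "poly p x = 0")
    case True
    then have "x \<in># A"
      using roots p0 by auto
    moreover have "count A x \<le> 1"
      using assms p0 roots unfolding rsquarefree_def by (metis count_proots le_refl zero_le)
    ultimately show ?thesis
      using True poly_roots_finite[OF p0] by (simp add: le_antisym)
  next
    case False
    then show ?thesis
      using roots p0 by (auto simp: count_eq_zero_iff)
  qed
  then have "A = mset_set {x. poly p x = 0}"
    by (rule multiset_eqI)
  then show ?thesis
    using A(1) by (metis size_mset_set)
qed

lemma rsquarefreeI_pderiv:
  fixes p :: "'a::idom poly"
  assumes "p \<noteq> 0" and "\<And>a. poly p a = 0 \<Longrightarrow> poly (pderiv p) a \<noteq> 0"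
  shows "rsquarefree p"
  unfolding rsquarefree_def
proof (intro conjI assms(1) allI)
  fix a
  show "order a p = 0 \<or> order a p = 1"
  proof (rule ccontr)
    assume "\<not> ?thesis"
    then have "2 \<le> order a p"
      by linarith
    then have "[:-a, 1:] ^ 2 dvd [:-a, 1:] ^ order a p"
      by (rule le_imp_power_dvd)
    then have "[:-a, 1:] ^ 2 dvd p"
      using order_1 dvd_trans by blast
    then obtain h where "p = [:-a, 1:] ^ 2 * h"
      by (elim dvdE)
    then have h: "p = [:-a, 1:] * ([:-a, 1:] * h)"
      by (simp only: power2_eq_square mult.assoc)
    have "poly p a = 0" and "poly (pderiv p) a = 0"
      unfolding h by (simp_all only: pderiv_mult poly_add poly_mult) simp_all
    with assms(2) show False
      by blast
  qed
qed

lemma roots_unity_finite_card_le: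
  assumes "k > 0"
  shows "finite {x :: 'a::idom. x ^ k = 1}" and "card {x :: 'a. x ^ k = 1} \<le> k"
proof -
  define p :: "'a poly" where "p = monom 1 k - 1"
  have "degree p = k"
    unfolding p_def diff_conv_add_uminus using assms
    by (subst degree_add_eq_left) (simp_all add: degree_monom_eq)
  then have "p \<noteq> 0"
    using assms by auto
  moreover have roots: "{x. x ^ k = 1} = {x. poly p x = 0}"
    by (simp add: p_def poly_monom)
  ultimately show "finite {x :: 'a. x ^ k = 1}" and "card {x :: 'a. x ^ k = 1} \<le> k"
    using poly_roots_finite[of p] card_poly_roots_bound[of p] \<open>degree p = k\<close> by simp_all
qed

lemma root_fixed_by_power_iterate:
  fixes p :: "'a::idom poly"
  assumes "p \<noteq> 0" and "poly p \<alpha> = 0" and closed: "\<And>x. poly p x = 0 \<Longrightarrow> poly p (x ^ Q) = 0"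
    and inj: "inj (\<lambda>x::'a. x ^ Q)"
  shows "\<exists>m. 0 < m \<and> m \<le> degree p \<and> \<alpha> ^ Q ^ m = \<alpha>"
proof -
  define f where "f k = \<alpha> ^ Q ^ k" for k
  have f_Suc: "f (Suc k) = f k ^ Q" for k
    by (simp add: f_def power_mult[symmetric] mult.commute)
  have roots: "f k \<in> {x. poly p x = 0}" for k
    by (induction k) (simp_all add: f_def[of 0] assms(2) f_Suc closed)
  have "\<not> inj_on f {0..degree p}"
  proof
    assume "inj_on f {0..degree p}"
    then have "Suc (degree p) = card (f ` {0..degree p})"
      by (simp add: card_image)
    also have "\<dots> \<le> card {x. poly p x = 0}"
      using roots poly_roots_finite[OF assms(1)] by (intro card_mono) auto
    also have "\<dots> \<le> degree p"
      by (rule card_poly_roots_bound[OF assms(1)])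
    finally show False
      by simp
  qed
  then obtain i j where ij: "i < j" "j \<le> degree p" "f i = f j"
    unfolding inj_on_def by (metis atLeastAtMost_iff linorder_neqE_nat)
  then have "(\<alpha> ^ Q ^ (j - i)) ^ Q ^ i = \<alpha> ^ Q ^ i"
    by (simp add: f_def power_mult[symmetric] power_add[symmetric])
  then have "\<alpha> ^ Q ^ (j - i) = \<alpha>"
    using inj_power_power[OF inj, of i] unfolding inj_def by blast
  then show ?thesis
    using ij by (intro exI[of _ "j - i"]) simp
qed

section \<open>Fixed fields of Frobenius powers\<close>

text \<open>In an algebraically closed field of characteristic \<open>p\<close> and for \<open>q\<close> a power of \<open>p\<close>,
  this is the unique subfield with \<open>q\<close> elements.\<close>

definition GF :: "nat \<Rightarrow> 'a::field set" where
  "GF q = {x. x ^ q = x}"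

lemma mem_GF_iff: "x \<in> GF q \<longleftrightarrow> x ^ q = x"
  by (simp add: GF_def)

lemma GF_mult: "x \<in> GF q \<Longrightarrow> y \<in> GF q \<Longrightarrow> x * y \<in> GF q"
  by (simp add: mem_GF_iff power_mult_distrib)

lemma GF_inverse: "x \<in> GF q \<Longrightarrow> inverse x \<in> GF q"
  by (simp add: mem_GF_iff power_inverse)

lemma GF_power: "x \<in> GF q \<Longrightarrow> x ^ n \<in> GF q"
proof -
  have "(x ^ n) ^ q = (x ^ q) ^ n"
    by (simp only: power_mult[symmetric] mult.commute)
  then show "x \<in> GF q \<Longrightarrow> x ^ n \<in> GF q"
    by (simp add: mem_GF_iff)
qed

lemma GF_power_pred_eq_1:
  assumes "x \<in> GF q" and "x \<noteq> 0" and "q > 0"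
  shows "x ^ (q - 1) = 1"
proof -
  have "x * x ^ (q - 1) = x ^ q"
    using assms(3) by (cases q) simp_all
  then show ?thesis
    using assms(1,2) by (simp add: mem_GF_iff)
qed

lemma GF_subset_GF_power: "x \<in> GF q \<Longrightarrow> x \<in> GF (q ^ k)"
  by (induction k) (simp_all add: mem_GF_iff power_mult)

lemma GF_add:
  assumes "prime CHAR('a::field)" and "q = CHAR('a) ^ n"
  shows "x \<in> GF q \<Longrightarrow> y \<in> GF q \<Longrightarrow> (x + y :: 'a) \<in> GF q"
  by (simp add: mem_GF_iff freshmans_dream'[OF assms])

lemma GF_power_Int_GF_power_Suc:
  assumes "x \<in> GF (q ^ k)" and "x \<in> GF (q ^ Suc k)"
  shows "x \<in> GF q"
proof -
  have "x ^ q = (x ^ q ^ k) ^ q"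
    using assms(1) by (simp add: mem_GF_iff)
  also have "\<dots> = x ^ q ^ Suc k"
    by (simp only: power_mult[symmetric] power_Suc2)
  also have "\<dots> = x"
    using assms(2) by (simp add: mem_GF_iff)
  finally show ?thesis
    by (simp add: mem_GF_iff)
qed

lemma finite_card_GF:
  assumes "prime CHAR('a::alg_closed_field)" and "q = CHAR('a) ^ n" and "n > 0"
  shows "finite (GF q :: 'a set)" and "card (GF q :: 'a set) = q"
proof -
  define p :: "'a poly" where "p = monom 1 q - [:0, 1:]"
  have "2 \<le> CHAR('a)"
    using assms(1) by (rule prime_ge_2_nat)
  also have "CHAR('a) \<le> q"
    using assms(2,3) \<open>2 \<le> CHAR('a)\<close> by (simp add: self_le_power)
  finally have "q \<ge> 2" .
  then have "degree p = q"
    unfolding p_def diff_conv_add_uminus by (subst degree_add_eq_left) (simp_all add: degree_monom_eq)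
  have "of_nat q = (0 :: 'a)"
    using assms by (simp add: of_nat_eq_0_iff_char_dvd)
  then have "pderiv p = -1"
    by (simp add: p_def pderiv_diff pderiv_monom pderiv_pCons one_pCons)
  then have "rsquarefree p"
    by (intro rsquarefreeI_pderiv) auto
  moreover have "GF q = {x. poly p x = 0}"
    by (simp add: p_def poly_monom GF_def)
  ultimately show "finite (GF q :: 'a set)" and "card (GF q :: 'a set) = q"
    using card_roots_rsquarefree[of p] poly_roots_finite[of p] \<open>degree p = q\<close>
    by (simp_all add: rsquarefree_def)
qed

lemma range_to_ac_eq_GF:
  assumes "card (UNIV :: 'a::{field,finite} set) = CHAR('a) ^ n"
  shows "range (to_ac :: 'a \<Rightarrow> 'a alg_closure) = GF (card (UNIV :: 'a set))"
proof -
  let ?q = "card (UNIV :: 'a set)"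
  have prime: "prime CHAR('a)"
    by (simp add: finite_imp_CHAR_pos prime_CHAR_semidom)
  have "n > 0"
  proof (rule ccontr)
    assume "\<not> n > 0"
    then obtain x where "UNIV = {x :: 'a}"
      using assms by (metis card_1_singletonE One_nat_def power_0 neq0_conv)
    then show False
      by (metis UNIV_I singletonD zero_neq_one)
  qed
  then have card_GF: "card (GF ?q :: 'a alg_closure set) = ?q"
    using prime assms by (intro finite_card_GF(2)[where n = n]) simp_all
  have "range (to_ac :: 'a \<Rightarrow> 'a alg_closure) \<subseteq> GF ?q"
    by (auto simp flip: to_ac_power simp: mem_GF_iff power_card_UNIV_eq_same)
  moreover have "card (range (to_ac :: 'a \<Rightarrow> 'a alg_closure)) = ?q"
    by (simp add: card_image inj_to_ac)
  moreover have "finite (GF ?q :: 'a alg_closure set)"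
    using prime assms \<open>n > 0\<close> by (intro finite_card_GF(1)[where n = n]) simp_all
  ultimately show ?thesis
    using card_GF by (intro card_subset_eq) auto
qed

section \<open>Power sums over finite multiplicative groups\<close>

lemma power_int_eq_power_mod:
  fixes x :: "'a::field"
  assumes "x \<noteq> 0" and "x ^ N = 1" and "N > 0"
  shows "x powi e = x ^ nat (e mod int N)"
proof -
  have "x powi e = x powi (int N * (e div int N) + e mod int N)"
    by simp
  also have "\<dots> = (x powi int N) powi (e div int N) * x powi (e mod int N)"
    using assms(1) by (simp only: power_int_add power_int_mult power_int_of_nat simp_thms)
  also have "\<dots> = x ^ nat (e mod int N)"
    using assms(2,3) by (simp add: power_int_nonneg_exp)
  finally show ?thesis .
qed

lemma sum_power_int_eq_0_if_nontrivial:
  fixes G :: "'a::field set"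
  assumes "finite G" and "0 \<notin> G" and "\<And>x y. x \<in> G \<Longrightarrow> y \<in> G \<Longrightarrow> x * y \<in> G"
    and "g \<in> G" and "g powi e \<noteq> 1"
  shows "(\<Sum>r\<in>G. r powi e) = 0"
proof -
  have "inj_on ((*) g) G"
    using assms(2,4) by (auto simp: inj_on_def)
  moreover have "(*) g ` G = G"
    using assms by (intro endo_inj_surj) (auto simp: inj_on_def)
  ultimately have "(\<Sum>r\<in>G. r powi e) = (\<Sum>r\<in>G. (g * r) powi e)"
    by (metis (no_types, lifting) sum.reindex_cong)
  also have "\<dots> = g powi e * (\<Sum>r\<in>G. r powi e)"
    by (simp add: power_int_mult_distrib sum_distrib_left)
  finally have "(g powi e - 1) * (\<Sum>r\<in>G. r powi e) = 0"
    by (simp add: left_diff_distrib)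
  then show ?thesis
    using assms(5) by simp
qed

lemma sum_power_int_finite_mult_group:
  fixes G :: "'a::field set"
  assumes "finite G" and "0 \<notin> G" and mult: "\<And>x y. x \<in> G \<Longrightarrow> y \<in> G \<Longrightarrow> x * y \<in> G"
    and order: "\<And>x. x \<in> G \<Longrightarrow> x ^ card G = 1"
  shows "(\<Sum>r\<in>G. r powi e) = (if int (card G) dvd e then of_nat (card G) else 0)"
proof (cases "G = {}")
  case False
  let ?N = "card G" and ?k = "nat (e mod int (card G))"
  have "?N > 0"
    using False assms(1) by (simp add: card_gt_0_iff)
  have reduce: "r powi e = r ^ ?k" if "r \<in> G" for r
    using that assms(2) order \<open>?N > 0\<close> by (metis power_int_eq_power_mod)
  show ?thesis
  proof (cases "int ?N dvd e")
    case True
    then show ?thesis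
      using reduce by simp
  next
    case False
    moreover have "0 \<le> e mod int ?N" "e mod int ?N < int ?N"
      using \<open>?N > 0\<close> by simp_all
    ultimately have k: "0 < ?k" "?k < ?N"
      by (auto simp: dvd_eq_mod_eq_0)
    have "\<not> G \<subseteq> {x. x ^ ?k = 1}"
    proof
      assume "G \<subseteq> {x. x ^ ?k = 1}"
      then have "?N \<le> card {x :: 'a. x ^ ?k = 1}"
        by (rule card_mono[OF roots_unity_finite_card_le(1)[OF k(1)]])
      then show False
        using roots_unity_finite_card_le(2)[OF k(1), where ?'a = 'a] k(2) by linarith
    qed
    then obtain g where "g \<in> G" "g powi e \<noteq> 1"
      using reduce by auto
    then show ?thesis
      using sum_power_int_eq_0_if_nontrivial[OF assms(1-3)] False by simp
  qed
qed simp

lemma sum_power_int_GF: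
  assumes "prime CHAR('a::alg_closed_field)" and "q = CHAR('a) ^ n" and "n > 0"
  shows "(\<Sum>r\<in>GF q - {0}. r powi e) = (if int (q - 1) dvd e then of_nat (q - 1) else 0 :: 'a)"
proof -
  have "q > 0"
    using assms(1,2) by (simp add: prime_gt_0_nat)
  have "card (GF q - {0 :: 'a}) = q - 1"
    using finite_card_GF[OF assms] by (simp add: mem_GF_iff card_Diff_singleton zero_power \<open>q > 0\<close>)
  moreover have "x ^ (q - 1) = 1" if "x \<in> GF q - {0 :: 'a}" for x
    using that \<open>q > 0\<close> GF_power_pred_eq_1 by blast
  ultimately show ?thesis
    using finite_card_GF(1)[OF assms]
    by (subst sum_power_int_finite_mult_group) (auto intro: GF_mult)
qed

section \<open>Traces\<close>

text \<open>For \<open>q\<close> a power of the characteristic and \<open>x \<in> GF (q ^ m)\<close>, the trace of \<open>x\<close> from the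
  field with \<open>q ^ m\<close> elements to the one with \<open>q\<close> elements.\<close>

definition frob_trace :: "nat \<Rightarrow> nat \<Rightarrow> 'a::field \<Rightarrow> 'a" where
  "frob_trace q m x = (\<Sum>i<m. x ^ q ^ i)"

lemma frob_trace_0: "q > 0 \<Longrightarrow> frob_trace q m 0 = 0"
  by (simp add: frob_trace_def zero_power)

lemma frob_trace_frob:
  assumes "x \<in> GF (q ^ m)"
  shows "frob_trace q m (x ^ q) = frob_trace q m x"
proof -
  have "frob_trace q m (x ^ q) = (\<Sum>i<m. x ^ q ^ Suc i)"
    unfolding frob_trace_def by (simp add: power_mult[symmetric] mult.commute)
  also have "\<dots> = (\<Sum>i<Suc m. x ^ q ^ i) - x"
    by (subst sum.lessThan_Suc_shift) simp
  also have "\<dots> = frob_trace q m x"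
    using assms by (simp add: mem_GF_iff frob_trace_def)
  finally show ?thesis .
qed

lemma frob_trace_frob_power:
  assumes "x \<in> GF (q ^ m)"
  shows "frob_trace q m (x ^ q ^ k) = frob_trace q m x"
proof (induction k)
  case (Suc k)
  have "x ^ q ^ Suc k = (x ^ q ^ k) ^ q"
    by (simp add: power_mult[symmetric] mult.commute)
  then show ?case
    using frob_trace_frob[OF GF_power[OF assms]] Suc by simp
qed simp

lemma frob_trace_mult_GF:
  assumes "c \<in> GF q"
  shows "frob_trace q m (c * x) = c * frob_trace q m x"
  using GF_subset_GF_power[OF assms]
  by (simp add: mem_GF_iff frob_trace_def power_mult_distrib sum_distrib_left)

lemma frob_trace_GF:
  assumes "x \<in> GF q"
  shows "frob_trace q m x = of_nat m * x"
  using GF_subset_GF_power[OF assms] by (simp add: mem_GF_iff frob_trace_def)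

context
  fixes q :: nat and a :: nat
  assumes prime_CHAR: "prime CHAR('a::field)" and q_power: "q = CHAR('a) ^ a"
begin

lemma q_power_eq_CHAR_power: "q ^ i = CHAR('a) ^ (a * i)"
  by (simp add: q_power power_mult)

lemma frob_trace_diff: "frob_trace q m (x - y :: 'a) = frob_trace q m x - frob_trace q m y"
  unfolding frob_trace_def
  by (simp add: diff_power_prime_CHAR[OF prime_CHAR q_power_eq_CHAR_power] sum_subtractf)

lemma frob_trace_power_char:
  assumes "Q = CHAR('a) ^ b"
  shows "frob_trace q m (x ^ Q :: 'a) = frob_trace q m x ^ Q"
  unfolding frob_trace_def freshmans_dream_sum'[OF prime_CHAR assms]
  by (simp add: power_mult[symmetric] mult.commute)

lemma frob_trace_in_GF:
  assumes "x \<in> GF (q ^ m)"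
  shows "frob_trace q m (x :: 'a) \<in> GF q"
  using frob_trace_power_char[OF q_power] frob_trace_frob[OF assms] by (simp add: mem_GF_iff)

lemma frob_trace_artin_schreier:
  assumes "x \<in> GF (q ^ m)"
  shows "frob_trace q m (x ^ q - x :: 'a) = 0"
  using frob_trace_frob[OF assms] by (simp add: frob_trace_diff)

end

lemma frob_trace_mult_inverse_expand:
  fixes r :: "'a::field"
  assumes "prime CHAR('a)" and "p = CHAR('a) ^ b" and "r \<noteq> 0"
  shows "frob_trace p e (frob_trace q m r * frob_trace q n (inverse r))
    = (\<Sum>k<e. \<Sum>i<m. \<Sum>j<n. r powi (int p ^ k * (int q ^ i - int q ^ j)))"
proof -
  have pk: "p ^ k = CHAR('a) ^ (b * k)" for k
    using assms(2) by (simp add: power_mult)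
  have "frob_trace q m r * frob_trace q n (inverse r) = (\<Sum>i<m. \<Sum>j<n. r powi (int q ^ i - int q ^ j))"
    using assms(3) by (simp add: frob_trace_def sum_product power_int_diff field_simps flip: of_nat_power)
  then show ?thesis
    unfolding frob_trace_def
    by (simp add: freshmans_dream_sum'[OF assms(1) pk] power_int_power' mult.commute)
qed

abbreviation rel_trace :: "nat \<Rightarrow> 'a::field \<Rightarrow> 'a" where
  "rel_trace d \<equiv> frob_trace (2 ^ d) 3"

abbreviation abs_trace :: "nat \<Rightarrow> 'a::field \<Rightarrow> 'a" where
  "abs_trace d \<equiv> frob_trace 2 d"

section \<open>Irreducibility over a finite field\<close>

lemma poly_power_CHAR_power:
  fixes p :: "'a::field poly"
  assumes "prime CHAR('a)" and "Q = CHAR('a) ^ n" and "\<And>i. coeff p i \<in> GF Q"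
  shows "poly p (x ^ Q) = poly p x ^ Q"
  using assms(3)
proof (induction p)
  case (pCons c p)
  have "c \<in> GF Q" and "\<And>i. coeff p i \<in> GF Q"
    using pCons.prems[of 0] pCons.prems[of "Suc _"] by simp_all
  then show ?case
    using pCons.IH by (simp add: mem_GF_iff freshmans_dream'[OF assms(1,2)] power_mult_distrib)
qed (simp add: zero_power assms(2) prime_gt_0_nat[OF assms(1)])

lemma map_poly_to_ac_add:
  "map_poly to_ac (p + q) = map_poly to_ac p + map_poly (to_ac :: 'a::field \<Rightarrow> _) q"
  by (intro poly_eqI) (simp add: coeff_map_poly)

lemma map_poly_to_ac_mult:
  "map_poly to_ac (p * q) = map_poly to_ac p * map_poly (to_ac :: 'a::field \<Rightarrow> _) q"
proof (induction p)
  case (pCons c p)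
  have "map_poly to_ac (pCons c p * q) = map_poly to_ac (smult c q + pCons 0 (p * q))"
    by simp
  also have "\<dots> = smult (to_ac c) (map_poly to_ac q) + pCons 0 (map_poly to_ac p * map_poly to_ac q)"
    by (simp add: map_poly_to_ac_add map_poly_smult map_poly_pCons pCons.IH)
  also have "\<dots> = map_poly to_ac (pCons c p) * map_poly to_ac q"
    by (simp add: map_poly_pCons)
  finally show ?case .
qed simp

lemma finite_field_poly_root_in_GF:
  fixes g :: "'a::{field,finite} poly"
  assumes card: "card (UNIV :: 'a set) = CHAR('a) ^ e" and "degree g > 0"
  shows "\<exists>\<alpha> m. poly (map_poly to_ac g) \<alpha> = 0 \<and> 0 < m \<and> m \<le> degree g
           \<and> \<alpha> \<in> GF (card (UNIV :: 'a set) ^ m)"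
proof -
  let ?Q = "card (UNIV :: 'a set)" and ?G = "map_poly to_ac g"
  have prime: "prime CHAR('a alg_closure)"
    by (simp add: finite_imp_CHAR_pos prime_CHAR_semidom)
  have Q: "?Q = CHAR('a alg_closure) ^ e"
    using card by simp
  have "degree ?G = degree g"
    by (simp add: degree_map_poly)
  then obtain \<alpha> where "poly ?G \<alpha> = 0"
    using alg_closed_imp_poly_has_root assms(2) by metis
  moreover have "poly ?G (x ^ ?Q) = 0" if "poly ?G x = 0" for x
  proof -
    have "coeff ?G i \<in> GF ?Q" for i
      by (simp add: mem_GF_iff coeff_map_poly power_card_UNIV_eq_same flip: to_ac_power)
    then show ?thesis
      using that by (simp add: poly_power_CHAR_power[OF prime Q] finite_UNIV_card_ge_0)
  qed
  moreover have "inj (\<lambda>x::'a alg_closure. x ^ ?Q)"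
    by (rule injI) (simp add: power_prime_CHAR_eq_iff[OF prime Q])
  moreover have "?G \<noteq> 0"
    using \<open>degree ?G = degree g\<close> assms(2) by auto
  ultimately show ?thesis
    using root_fixed_by_power_iterate[of ?G \<alpha> ?Q] \<open>degree ?G = degree g\<close> by (auto simp: mem_GF_iff)
qed

lemma finite_field_irreducibleI:
  fixes p :: "'a::{field,finite} poly"
  assumes card: "card (UNIV :: 'a set) = CHAR('a) ^ e" and "degree p > 0"
    and no_small_roots: "\<And>\<alpha> m. poly (map_poly to_ac p) \<alpha> = 0 \<Longrightarrow> 0 < m \<Longrightarrow> 2 * m \<le> degree p
           \<Longrightarrow> \<alpha> \<notin> GF (card (UNIV :: 'a set) ^ m)"
  shows "irreducible p"
proof (rule Factorial_Ring.irreducibleI)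
  show "p \<noteq> 0"
    using assms(2) by auto
  then show "\<not> p dvd 1"
    using assms(2) by (simp add: is_unit_iff_degree)
  fix g h
  assume p: "p = g * h"
  show "g dvd 1 \<or> h dvd 1"
  proof (rule ccontr)
    assume "\<not> (g dvd 1 \<or> h dvd 1)"
    moreover have "g \<noteq> 0" "h \<noteq> 0"
      using p \<open>p \<noteq> 0\<close> by auto
    ultimately have "degree g > 0" "degree h > 0" "degree p = degree g + degree h"
      using p by (auto simp: is_unit_iff_degree degree_mult_eq)
    then have "\<exists>f \<in> {g, h}. degree f > 0 \<and> 2 * degree f \<le> degree p"
      by auto
    then obtain f where f: "f dvd p" "degree f > 0" "2 * degree f \<le> degree p"
      using p by (auto intro: dvd_triv_left dvd_triv_right)
    then obtain \<alpha> m where "poly (map_poly to_ac f) \<alpha> = 0" "0 < m" "m \<le> degree f"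
        "\<alpha> \<in> GF (card (UNIV :: 'a set) ^ m)"
      using finite_field_poly_root_in_GF[OF card] by blast
    moreover have "poly (map_poly to_ac p) \<alpha> = 0"
      using f(1) \<open>poly (map_poly to_ac f) \<alpha> = 0\<close> by (auto elim!: dvdE simp: map_poly_to_ac_mult)
    ultimately show False
      using no_small_roots f(3) by fastforce
  qed
qed

section \<open>A character sum\<close>

lemma exponent_bound:
  fixes q a M :: int and i j :: nat
  assumes q: "q \<ge> 4" and a: "1 \<le> a" "2 * a \<le> q" and M: "M = q - 1 \<or> M = 3 * (q - 1)"
    and "i < 3" "j < 3"
  shows "\<bar>a * (q ^ i - q ^ j) + M\<bar> < q ^ 3 - 1"
proof -
  have pow: "1 \<le> q ^ k \<and> q ^ k \<le> q ^ 2" if "k < 3" for k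
    using that q by (auto intro: power_increasing one_le_power)
  have "\<bar>q ^ i - q ^ j\<bar> \<le> q ^ 2 - 1"
    using pow[OF \<open>i < 3\<close>] pow[OF \<open>j < 3\<close>] by linarith
  then have "2 * (a * \<bar>q ^ i - q ^ j\<bar>) \<le> q * (q ^ 2 - 1)"
    using a q by (simp only: mult.assoc[symmetric]) (intro mult_mono, auto)
  also have "\<dots> = q ^ 3 - q"
    by (simp add: power2_eq_square power3_eq_cube algebra_simps)
  finally have "2 * (a * \<bar>q ^ i - q ^ j\<bar>) \<le> q ^ 3 - q" .
  moreover have "16 * q \<le> q ^ 3"
  proof -
    have "16 * q \<le> q ^ 2 * q"
      using q power_mono[of 4 q 2] by (intro mult_right_mono) auto
    then show ?thesis
      by (simp add: power2_eq_square power3_eq_cube)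
  qed
  moreover have "\<bar>a * (q ^ i - q ^ j) + M\<bar> \<le> a * \<bar>q ^ i - q ^ j\<bar> + M"
    using a M q abs_triangle_ineq[of "a * (q ^ i - q ^ j)" M] by (auto simp: abs_mult)
  ultimately show ?thesis
    using M q by (smt (verit))
qed

lemma exponent_nonzero:
  fixes q a M :: int and i j :: nat
  assumes q: "q \<ge> 4" and a: "1 \<le> a" and M: "M = q - 1 \<or> M = 3 * (q - 1)"
    and "i < 3" "j < 3" and "\<not> (i = 0 \<and> j = 1)"
  shows "a * (q ^ i - q ^ j) + M \<noteq> 0"
proof -
  have "0 < M" "M < q ^ 2 - q"
    using M q mult_strict_right_mono[of 3 q "q - 1"] by (auto simp: power2_eq_square algebra_simps)
  consider "j \<le> i" | "q ^ 2 - q \<le> q ^ j - q ^ i"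
    using assms(4-6) q by (fastforce simp: less_Suc_eq numeral_3_eq_3 numeral_2_eq_2 power2_eq_square)
  then show ?thesis
  proof cases
    case 1
    then have "0 \<le> a * (q ^ i - q ^ j)"
      using a q by (simp add: power_increasing)
    then show ?thesis
      using \<open>0 < M\<close> by linarith
  next
    case 2
    moreover have "0 \<le> q ^ 2 - q"
      using q by (simp add: power2_eq_square)
    ultimately have "q ^ j - q ^ i \<le> a * (q ^ j - q ^ i)"
      using mult_right_mono[OF a, of "q ^ j - q ^ i"] by simp
    with 2 have "q ^ 2 - q \<le> a * (q ^ j - q ^ i)"
      by linarith
    then show ?thesis
      using \<open>M < q ^ 2 - q\<close> by (simp add: right_diff_distrib)
  qed
qed

lemma exponent_eq_0_iff:
  fixes q a M :: int and i j :: nat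
  assumes q: "q \<ge> 4" and a: "1 \<le> a" "a \<noteq> 3" and M: "M = q - 1 \<or> M = 3 * (q - 1)"
    and "i < 3" "j < 3"
  shows "a * (q ^ i - q ^ j) + M = 0 \<longleftrightarrow> M = q - 1 \<and> a = 1 \<and> i = 0 \<and> j = 1"
proof (cases "i = 0 \<and> j = 1")
  case True
  have "q - 1 \<noteq> 0"
    using q by simp
  then have "c * (q - 1) = a * (q - 1) \<longleftrightarrow> c = a" for c
    by simp
  from this[of 1] this[of 3] have "M = a * (q - 1) \<longleftrightarrow> M = q - 1 \<and> a = 1"
    using M a(2) by auto
  moreover have "a * (q ^ i - q ^ j) + M = M - a * (q - 1)"
    using True by (simp add: algebra_simps)
  ultimately show ?thesis
    using True by simp
qed (use exponent_nonzero[OF q a(1) M assms(5,6)] in simp)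

lemma exponent_dvd_iff:
  fixes q a M :: int and i j :: nat
  assumes "q \<ge> 4" and "1 \<le> a" "2 * a \<le> q" "a \<noteq> 3" and "M = q - 1 \<or> M = 3 * (q - 1)"
    and "i < 3" "j < 3"
  shows "(q ^ 3 - 1) dvd (a * (q ^ i - q ^ j) + M) \<longleftrightarrow> M = q - 1 \<and> a = 1 \<and> i = 0 \<and> j = 1"
proof -
  have "(q ^ 3 - 1) dvd (a * (q ^ i - q ^ j) + M) \<longleftrightarrow> a * (q ^ i - q ^ j) + M = 0"
    using exponent_bound[OF assms(1-3,5-7)] dvd_imp_le_int[of "a * (q ^ i - q ^ j) + M" "q ^ 3 - 1"]
    by fastforce
  then show ?thesis
    using exponent_eq_0_iff[OF assms(1,2,4-7)] by simp
qed

lemma sum_exponent_hits: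
  fixes d M :: nat
  assumes "d \<ge> 2" and M: "M = 2 ^ d - 1 \<or> M = 3 * (2 ^ d - 1)"
  shows "(\<Sum>k<d. \<Sum>i<3. \<Sum>j<3. if int ((2 ^ d) ^ 3 - 1) dvd
            (2 ^ k * ((2 ^ d) ^ i - (2 ^ d) ^ j) + int M) then 1 else 0)
         = (if M = 2 ^ d - 1 then 1 else 0 :: 'a::semiring_1)"
proof -
  let ?q = "2 ^ d :: int"
  have "?q \<ge> 2 ^ 2"
    using assms(1) by (intro power_increasing) auto
  moreover have "2 * 2 ^ k \<le> ?q" if "k < d" for k :: nat
    using that by (metis power_Suc power_increasing Suc_leI one_le_numeral)
  moreover have "2 ^ k \<noteq> (3 :: int)" for k :: nat
    by (cases k) (simp_all, presburger)
  moreover have "int M = ?q - 1 \<or> int M = 3 * (?q - 1)" and "int M = ?q - 1 \<longleftrightarrow> M = 2 ^ d - 1"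
    using M assms(1) power_increasing[of 2 d "2 :: nat"] by (auto simp: of_nat_diff)
  moreover have "int ((2 ^ d) ^ 3 - 1) = ?q ^ 3 - 1"
    by (simp add: of_nat_diff)
  ultimately have "(\<Sum>k<d. \<Sum>i<3. \<Sum>j<3. if int ((2 ^ d) ^ 3 - 1) dvd
            (2 ^ k * ((2 ^ d) ^ i - (2 ^ d) ^ j) + int M) then 1 else 0)
        = (\<Sum>k<d. \<Sum>i<3::nat. \<Sum>j<3::nat. if M = 2 ^ d - 1 \<and> k = 0 \<and> i = 0 \<and> j = 1 then 1 else 0 :: 'a)"
    by (intro sum.cong refl) (simp add: exponent_dvd_iff)
  also have "\<dots> = (if M = 2 ^ d - 1 then 1 else 0)"
    using assms(1) by (simp add: numeral_3_eq_3 lessThan_Suc)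
  finally show ?thesis .
qed

lemma char_sum_trace_product:
  fixes M :: nat
  assumes char: "CHAR('a::alg_closed_field) = 2" and "d \<ge> 2"
    and M: "M = 2 ^ d - 1 \<or> M = 3 * (2 ^ d - 1)"
  shows "(\<Sum>r\<in>GF ((2 ^ d) ^ 3) - {0}. abs_trace d (rel_trace d r * rel_trace d (inverse r)) * r ^ M)
         = (if M = 2 ^ d - 1 then 1 else 0 :: 'a)"
proof -
  let ?K = "GF ((2 ^ d) ^ 3) - {0 :: 'a}"
  let ?e = "\<lambda>k i j. 2 ^ k * ((2 ^ d) ^ i - (2 ^ d) ^ j) + int M :: int"
  have prime: "prime CHAR('a)" and two: "2 = CHAR('a) ^ 1" and Q: "(2 ^ d) ^ 3 = CHAR('a) ^ (d * 3)"
    using char by (simp_all add: power_mult)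
  have "(\<Sum>r\<in>?K. abs_trace d (rel_trace d r * rel_trace d (inverse r)) * r ^ M)
      = (\<Sum>r\<in>?K. \<Sum>k<d. \<Sum>i<3. \<Sum>j<3. r powi ?e k i j)"
  proof (intro sum.cong refl)
    fix r :: 'a
    assume "r \<in> ?K"
    then show "abs_trace d (rel_trace d r * rel_trace d (inverse r)) * r ^ M
        = (\<Sum>k<d. \<Sum>i<3. \<Sum>j<3. r powi ?e k i j)"
      using frob_trace_mult_inverse_expand[OF prime two, of r]
      by (simp add: sum_distrib_right power_int_add flip: power_int_of_nat)
  qed
  also have "\<dots> = (\<Sum>k<d. \<Sum>i<3. \<Sum>j<3. \<Sum>r\<in>?K. r powi ?e k i j)"
    by (subst sum.swap, subst (2) sum.swap, subst (3) sum.swap) (rule refl)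
  also have "\<dots> = (\<Sum>k<d. \<Sum>i<3. \<Sum>j<3. if int ((2 ^ d) ^ 3 - 1) dvd ?e k i j then 1 else 0)"
  proof -
    have "odd ((2 ^ d) ^ 3 - 1 :: nat)"
      using assms(2) by (simp add: power_mult[symmetric])
    then have one: "of_nat ((2 ^ d) ^ 3 - 1) = (1 :: 'a)"
      by (simp only: of_nat_CHAR_2[OF char] if_False)
    have "0 < d * 3"
      using assms(2) by simp
    then show ?thesis
      by (simp only: sum_power_int_GF[OF prime Q] one)
  qed
  also have "\<dots> = (if M = 2 ^ d - 1 then 1 else 0)"
    by (rule sum_exponent_hits[OF assms(2) M])
  finally show ?thesis .
qed

lemma trace_product_on_GF:
  fixes r :: "'a::field"
  assumes char: "CHAR('a) = 2" and "r \<in> GF (2 ^ d)" and "r \<noteq> 0" and "(2 ^ d - 1) dvd M"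
  shows "abs_trace d (rel_trace d r * rel_trace d (inverse r)) * r ^ M = of_nat d"
proof -
  have "rel_trace d x = x" if "x \<in> GF (2 ^ d)" for x :: 'a
    using that by (simp add: frob_trace_GF of_nat_CHAR_2[OF char])
  then have "rel_trace d r * rel_trace d (inverse r) = 1"
    using assms(2,3) GF_inverse[OF assms(2)] by simp
  moreover obtain c where "M = (2 ^ d - 1) * c"
    using assms(4) by blast
  then have "r ^ M = 1"
    using GF_power_pred_eq_1[OF assms(2,3)] by (simp add: power_mult)
  ultimately show ?thesis
    using frob_trace_GF[of 1 2 d] by (simp add: mem_GF_iff)
qed

lemma exists_trace_product_nonzero:
  assumes char: "CHAR('a::alg_closed_field) = 2" and "d \<ge> 2"
  shows "\<exists>r \<in> GF ((2 ^ d) ^ 3) - GF (2 ^ d). abs_trace d (rel_trace d r * rel_trace d (inverse r)) \<noteq> (0 :: 'a)"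
proof (rule ccontr)
  define \<Phi> where "\<Phi> r = abs_trace d (rel_trace d r * rel_trace d (inverse r))" for r :: 'a
  \<comment> \<open>chosen so that the two evaluations of the sum below have different parity\<close>
  define M where "M = (if even d then 2 ^ d - 1 else 3 * (2 ^ d - 1 :: nat))"
  assume "\<not> (\<exists>r \<in> GF ((2 ^ d) ^ 3) - GF (2 ^ d). \<Phi> r \<noteq> 0)"
  then have vanish: "\<Phi> r = 0" if "r \<in> GF ((2 ^ d) ^ 3) - GF (2 ^ d)" for r
    using that by blast
  have prime: "prime CHAR('a)" and Q: "(2 ^ d) ^ k = CHAR('a) ^ (d * k)" for k
    using char by (simp_all add: power_mult)
  have "0 < d" "0 < d * 3" "2 ^ d \<ge> (4 :: nat)"
    using assms(2) power_increasing[of 2 d "2 :: nat"] by simp_all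
  have "(\<Sum>r\<in>GF ((2 ^ d) ^ 3) - {0}. \<Phi> r * r ^ M) = (\<Sum>r\<in>GF (2 ^ d) - {0}. \<Phi> r * r ^ M)"
    using finite_card_GF(1)[OF prime Q \<open>0 < d * 3\<close>] vanish
    by (intro sum.mono_neutral_right) (auto intro: GF_subset_GF_power)
  also have "\<dots> = of_nat d * of_nat (2 ^ d - 1)"
    using finite_card_GF[OF prime Q[of 1]] \<open>0 < d\<close>
    by (simp add: mem_GF_iff \<Phi>_def trace_product_on_GF[OF char] M_def card_Diff_singleton zero_power)
  also have "\<dots> = (if even d then 0 else 1)"
    using \<open>2 ^ d \<ge> 4\<close> by (simp add: of_nat_CHAR_2[OF char])
  finally show False
    using char_sum_trace_product[OF char assms(2), of M] \<open>2 ^ d \<ge> 4\<close>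
    by (auto simp: \<Phi>_def M_def split: if_splits)
qed

lemma exists_normalized_element:
  assumes char: "CHAR('a::alg_closed_field) = 2" and "d \<ge> 2"
  shows "\<exists>s \<in> GF ((2 ^ d) ^ 3) - GF (2 ^ d).
           rel_trace d s = 1 \<and> abs_trace d (rel_trace d (inverse s)) \<noteq> (0 :: 'a)"
proof -
  obtain r :: 'a where r: "r \<in> GF ((2 ^ d) ^ 3)" "r \<notin> GF (2 ^ d)"
    and nonzero: "abs_trace d (rel_trace d r * rel_trace d (inverse r)) \<noteq> 0"
    using exists_trace_product_nonzero[OF assms] by blast
  have prime: "prime CHAR('a)" and q: "2 ^ d = CHAR('a) ^ d"
    using char by simp_all
  define \<mu> where "\<mu> = rel_trace d (inverse r)"
  have \<mu>: "\<mu> \<in> GF (2 ^ d)"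
    unfolding \<mu>_def using r(1) by (intro frob_trace_in_GF[OF prime q] GF_inverse)
  have "\<mu> \<noteq> 0"
    using nonzero by (auto simp: \<mu>_def frob_trace_0)
  define s where "s = inverse (\<mu> * r)"
  have "s \<in> GF ((2 ^ d) ^ 3)"
    unfolding s_def using GF_subset_GF_power[OF \<mu>, of 3] r(1) by (intro GF_inverse GF_mult)
  moreover have "s \<notin> GF (2 ^ d)"
  proof
    assume "s \<in> GF (2 ^ d)"
    then have "inverse \<mu> * inverse s \<in> GF (2 ^ d)"
      using \<mu> by (intro GF_mult GF_inverse)
    then show False
      using r(2) \<open>\<mu> \<noteq> 0\<close> by (simp add: s_def mult.assoc[symmetric])
  qed
  moreover have "rel_trace d s = 1"
    using \<open>\<mu> \<noteq> 0\<close> frob_trace_mult_GF[OF GF_inverse[OF \<mu>]] by (simp add: s_def \<mu>_def mult.commute)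
  moreover have "abs_trace d (rel_trace d (inverse s)) \<noteq> 0"
    using nonzero frob_trace_mult_GF[OF \<mu>] by (simp add: s_def \<mu>_def mult.commute)
  ultimately show ?thesis
    by blast
qed

section \<open>The palindromic sextic\<close>

lemma quadratic_root_imp_abs_rel_trace_eq_0:
  fixes t \<sigma> :: "'a::field"
  assumes char: "CHAR('a) = 2" and "t \<in> GF ((2 ^ d) ^ 3)" and "\<sigma> \<in> GF ((2 ^ d) ^ 3)"
    and "\<sigma> \<noteq> 0" and root: "t ^ 2 + \<sigma> * t + 1 = 0"
  shows "abs_trace d (rel_trace d (inverse \<sigma>)) = 0"
proof -
  have prime: "prime CHAR('a)" and two: "2 = CHAR('a) ^ 1" and q: "2 ^ d = CHAR('a) ^ d"
    using char by simp_all
  define y where "y = t * inverse \<sigma>"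
  have y: "y \<in> GF ((2 ^ d) ^ 3)"
    unfolding y_def using assms(2,3) by (intro GF_mult GF_inverse)
  have "t ^ 2 + \<sigma> * t = - 1"
    using root by (simp add: eq_neg_iff_add_eq_0)
  then have "y ^ 2 + y = inverse \<sigma> ^ 2"
    using \<open>\<sigma> \<noteq> 0\<close> uminus_CHAR_2[OF char, of 1]
    by (simp add: y_def field_simps power2_eq_square)
  then have "y ^ 2 - y = inverse \<sigma> ^ 2"
    by (simp add: minus_CHAR_2[OF char])
  then have "rel_trace d (inverse \<sigma> ^ 2) = rel_trace d (y ^ 2) - rel_trace d y"
    by (metis frob_trace_diff[OF prime q])
  then have "rel_trace d (inverse \<sigma>) ^ 2 = rel_trace d y ^ 2 - rel_trace d y"
    by (simp add: frob_trace_power_char[OF prime q two])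
  moreover have "rel_trace d y \<in> GF (2 ^ d)"
    by (rule frob_trace_in_GF[OF prime q y])
  ultimately have "abs_trace d (rel_trace d (inverse \<sigma>) ^ 2) = 0"
    by (simp add: frob_trace_artin_schreier[OF prime two])
  moreover have "rel_trace d (inverse \<sigma>) \<in> GF (2 ^ d)"
    using assms(3) by (intro frob_trace_in_GF[OF prime q] GF_inverse)
  ultimately show ?thesis
    by (simp add: frob_trace_frob)
qed

lemma reciprocal_sum_not_in_small_GF:
  fixes \<alpha> :: "'a::field"
  assumes char: "CHAR('a) = 2" and "\<alpha> \<noteq> 0"
    and u: "\<alpha> + inverse \<alpha> \<in> GF ((2 ^ d) ^ 3)" "\<alpha> + inverse \<alpha> \<notin> GF (2 ^ d)"
      "abs_trace d (rel_trace d (inverse (\<alpha> + inverse \<alpha>))) \<noteq> 0"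
    and m: "0 < m" "m \<le> 3"
  shows "\<alpha> \<notin> GF ((2 ^ d) ^ m)"
proof
  assume \<alpha>: "\<alpha> \<in> GF ((2 ^ d) ^ m)"
  have prime: "prime CHAR('a)" and q: "(2 ^ d) ^ k = CHAR('a) ^ (d * k)" for k
    using char by (simp_all add: power_mult)
  consider "m = 2" | "\<alpha> \<in> GF ((2 ^ d) ^ 3)"
    using m \<alpha> GF_subset_GF_power[of \<alpha> "2 ^ d" 3] by (fastforce simp: le_Suc_eq numeral_3_eq_3)
  then show False
  proof cases
    case 1
    then have "\<alpha> + inverse \<alpha> \<in> GF ((2 ^ d) ^ 2)"
      using \<alpha> by (intro GF_add[OF prime q] GF_inverse) simp_all
    moreover have "\<alpha> + inverse \<alpha> \<in> GF ((2 ^ d) ^ Suc 2)"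
      using u(1) by (simp only: numeral_3_eq_3 numeral_2_eq_2)
    ultimately show False
      using u(2) GF_power_Int_GF_power_Suc by blast
  next
    case 2
    have "\<alpha> ^ 2 + (\<alpha> + inverse \<alpha>) * \<alpha> + 1 = 0"
      using \<open>\<alpha> \<noteq> 0\<close> of_nat_CHAR[where ?'a = 'a] char
      by (simp add: field_simps power2_eq_square mult_2[symmetric])
    moreover have "\<alpha> + inverse \<alpha> \<noteq> 0"
      using u(3) by (auto simp: frob_trace_0)
    ultimately show False
      using quadratic_root_imp_abs_rel_trace_eq_0[OF char 2 u(1)] u(3) by blast
  qed
qed

lemma palindromic_sextic_eq:
  fixes \<alpha> s s1 s2 :: "'a::field"
  assumes "CHAR('a) = 2" and "\<alpha> \<noteq> 0" and "s + s1 + s2 = 1"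
  shows "poly [:1, 1, s*s1 + s*s2 + s1*s2 + 1, s*s1*s2, s*s1 + s*s2 + s1*s2 + 1, 1, 1:] \<alpha>
    = \<alpha> ^ 3 * ((\<alpha> + inverse \<alpha> + s) * (\<alpha> + inverse \<alpha> + s1) * (\<alpha> + inverse \<alpha> + s2))"
proof -
  have s2: "s2 = 1 - s - s1"
    using assms(3) by (simp add: algebra_simps)
  have "\<alpha> ^ 3 * ((\<alpha> + inverse \<alpha> + s) * (\<alpha> + inverse \<alpha> + s1) * (\<alpha> + inverse \<alpha> + s2))
     = poly [:1, 1, s*s1 + s*s2 + s1*s2 + 1, s*s1*s2, s*s1 + s*s2 + s1*s2 + 1, 1, 1:] \<alpha>
       + 2 * (\<alpha> ^ 4 + \<alpha> ^ 3 + \<alpha> ^ 2)"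
    using assms(2) unfolding s2 by (simp add: field_simps power2_eq_square power3_eq_cube power4_eq_xxxx)
  then show ?thesis
    using of_nat_CHAR[where ?'a = 'a] assms(1) by simp
qed

text \<open>The sextic attached to \<open>s\<close>: its coefficients come from the elementary symmetric functions
  of the conjugates \<open>s\<close>, \<open>s ^ q\<close>, \<open>s ^ q\<^sup>2\<close> with \<open>q = 2 ^ d\<close>, as in \<open>palindromic_sextic_eq\<close>.\<close>

definition sextic :: "nat \<Rightarrow> 'a::field \<Rightarrow> 'a poly" where
  "sextic d s = (let s1 = s ^ 2 ^ d; s2 = s ^ (2 ^ d) ^ 2; c1 = s * s1 + s * s2 + s1 * s2
                 in [:1, 1, c1 + 1, s * s1 * s2, c1 + 1, 1, 1:])"

lemma sextic_coeffs_in_GF: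
  fixes s :: "'a::field"
  assumes char: "CHAR('a) = 2" and s: "s \<in> GF ((2 ^ d) ^ 3)"
  shows "\<exists>f1 f0. f1 \<in> GF (2 ^ d) \<and> f0 \<in> GF (2 ^ d) \<and> sextic d s = [:1, 1, f1, f0, f1, 1, 1:]"
proof -
  define s1 s2 where "s1 = s ^ 2 ^ d" and "s2 = s ^ (2 ^ d) ^ 2"
  have "s1 ^ 2 ^ d = s2" "s2 ^ 2 ^ d = s"
    using s by (simp_all add: s1_def s2_def mem_GF_iff power_mult[symmetric] power2_eq_square
        power3_eq_cube)
  then have "s * s1 + s * s2 + s1 * s2 + 1 \<in> GF (2 ^ d)" "s * s1 * s2 \<in> GF (2 ^ d)"
    using char by (simp_all add: mem_GF_iff freshmans_dream'[where n = d] power_mult_distrib s1_def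
        algebra_simps)
  then show ?thesis
    by (auto simp: sextic_def Let_def s1_def s2_def)
qed

lemma sextic_root_reciprocal_sum:
  fixes s \<alpha> :: "'a::field"
  assumes char: "CHAR('a) = 2" and "rel_trace d s = 1" and root: "poly (sextic d s) \<alpha> = 0"
  shows "\<alpha> \<noteq> 0" and "\<exists>k<3. \<alpha> + inverse \<alpha> = s ^ (2 ^ d) ^ k"
proof -
  let ?u = "\<alpha> + inverse \<alpha>"
  show "\<alpha> \<noteq> 0"
    using root by (auto simp: sextic_def Let_def)
  have "s + s ^ 2 ^ d + s ^ (2 ^ d) ^ 2 = 1"
    using assms(2) by (simp add: frob_trace_def numeral_3_eq_3 lessThan_Suc add.commute power2_eq_square)
  then have "\<alpha> ^ 3 * ((?u + s) * (?u + s ^ 2 ^ d) * (?u + s ^ (2 ^ d) ^ 2)) = 0"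
    using root palindromic_sextic_eq[OF char \<open>\<alpha> \<noteq> 0\<close>] by (simp add: sextic_def Let_def)
  then have "?u = s ^ (2 ^ d) ^ 0 \<or> ?u = s ^ (2 ^ d) ^ 1 \<or> ?u = s ^ (2 ^ d) ^ 2"
    using \<open>\<alpha> \<noteq> 0\<close> uminus_CHAR_2[OF char] by (simp add: add_eq_0_iff2)
  then show "\<exists>k<3. ?u = s ^ (2 ^ d) ^ k"
    by (elim disjE) (rule exI, rule conjI[rotated], assumption, simp)+
qed

lemma sextic_root_not_in_small_GF:
  fixes s \<alpha> :: "'a::field"
  assumes char: "CHAR('a) = 2"
    and s: "s \<in> GF ((2 ^ d) ^ 3)" "s \<notin> GF (2 ^ d)" "rel_trace d s = 1"
      "abs_trace d (rel_trace d (inverse s)) \<noteq> 0"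
    and root: "poly (sextic d s) \<alpha> = 0" and m: "0 < m" "m \<le> 3"
  shows "\<alpha> \<notin> GF ((2 ^ d) ^ m)"
proof -
  let ?u = "\<alpha> + inverse \<alpha>"
  obtain k where k: "k < 3" "?u = s ^ (2 ^ d) ^ k"
    using sextic_root_reciprocal_sum(2)[OF char s(3) root] by blast
  have "?u \<in> GF ((2 ^ d) ^ 3)"
    unfolding k(2) using s(1) by (rule GF_power)
  moreover have "?u \<notin> GF (2 ^ d)"
  proof
    assume "?u \<in> GF (2 ^ d)"
    moreover have "?u ^ (2 ^ d) ^ (3 - k) = s ^ ((2 ^ d) ^ k * (2 ^ d) ^ (3 - k))"
      using k(2) by (simp add: power_mult)
    moreover have "\<dots> = s"
      using k(1) s(1) by (simp add: mem_GF_iff flip: power_add)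
    ultimately show False
      using s(2) GF_power by metis
  qed
  moreover have "rel_trace d (inverse ?u) = rel_trace d (inverse s)"
    using k(2) frob_trace_frob_power[OF GF_inverse[OF s(1)]] by (simp add: power_inverse)
  ultimately show ?thesis
    using reciprocal_sum_not_in_small_GF[OF char sextic_root_reciprocal_sum(1)[OF char s(3) root]
        _ _ _ m] s(4) by simp
qed

lemma exists_palindromic_sextic_without_small_roots:
  assumes char: "CHAR('a::alg_closed_field) = 2" and "d \<ge> 2"
  shows "\<exists>f1 f0 :: 'a. f1 \<in> GF (2 ^ d) \<and> f0 \<in> GF (2 ^ d) \<and>
           (\<forall>\<alpha> m. poly [:1, 1, f1, f0, f1, 1, 1:] \<alpha> = 0 \<longrightarrow> 0 < m \<longrightarrow> m \<le> 3
                   \<longrightarrow> \<alpha> \<notin> GF ((2 ^ d) ^ m))"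
proof -
  obtain s :: 'a where s: "s \<in> GF ((2 ^ d) ^ 3)" "s \<notin> GF (2 ^ d)" "rel_trace d s = 1"
      "abs_trace d (rel_trace d (inverse s)) \<noteq> 0"
    using exists_normalized_element[OF assms] by blast
  obtain f1 f0 where "f1 \<in> GF (2 ^ d)" "f0 \<in> GF (2 ^ d)" "sextic d s = [:1, 1, f1, f0, f1, 1, 1:]"
    using sextic_coeffs_in_GF[OF char s(1)] by blast
  then show ?thesis
    using sextic_root_not_in_small_GF[OF char s] by metis
qed

theorem proposition7p12:
  fixes d :: nat
  assumes "d \<ge> 2"
    and "card (UNIV :: 'a::{field,finite} set) = 2 ^ d"
  shows "\<exists>f0 f1 :: 'a. irreducible [:1, 1, f1, f0, f1, 1, 1:]"
proof -
  have char: "CHAR('a) = 2"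
    using assms by (intro CHAR_eq_2_if_card_power_2[of d]) simp_all
  then have card: "card (UNIV :: 'a set) = CHAR('a) ^ d"
    using assms(2) by simp
  have "CHAR('a alg_closure) = 2"
    using char by simp
  then obtain f1 f0 :: "'a alg_closure" where f: "f1 \<in> GF (2 ^ d)" "f0 \<in> GF (2 ^ d)"
    and no_small_roots: "\<And>\<alpha> m. poly [:1, 1, f1, f0, f1, 1, 1:] \<alpha> = 0 \<Longrightarrow> 0 < m \<Longrightarrow> m \<le> 3
                               \<Longrightarrow> \<alpha> \<notin> GF ((2 ^ d) ^ m)"
    using exists_palindromic_sextic_without_small_roots[OF _ assms(1)] by blast
  obtain b1 b0 where "to_ac b1 = f1" "to_ac b0 = f0"
    using f range_to_ac_eq_GF[OF card] assms(2) by (metis imageE)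
  then have "map_poly to_ac [:1, 1, b1, b0, b1, 1, 1:] = [:1, 1, f1, f0, f1, 1, 1:]"
    by (simp add: map_poly_pCons)
  then have "irreducible [:1, 1, b1, b0, b1, 1, 1:]"
    using no_small_roots assms(2) by (intro finite_field_irreducibleI[OF card]) auto
  then show ?thesis
    by blast
qed

end
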